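(* Let $Z(t),t\in\mathbb{Z}^d$, be a BRs rf with $P(\sup_tZ(t)>0)=1$ and $E[Z(t)]=1$ for all $t$, and let $\Theta$ be defined by $P(\Theta\in A)=E[Z(0)\mathbf 1(Z/Z(0)\in A)]$. If $F:E\to[0,\infty]$ is a shift-invariant and 0-homogeneous measurable map, then $E[F(Z)]=0$ if and only if $E[F(\Theta)]=0$. If in addition $F\le1$, then $E[F(Z)]=1$ if and only if $E[F(\Theta)]=1$.
   Context: $E=[0,\infty)^{\mathbb{Z}^d}$ with product $\sigma$-field; shift $(B^hf)(t)=f(t-h)$; $F$ is 0-homogeneous if $F(cf)=F(f)$ for all $c>0$, and shift-invariant if $F(B^hf)=F(f)$ for all $h$. A non-negative rf $Z$ on $\mathbb{Z}^d$ with finite positive means is Brown–Resnick stationary (BRs) if $E[Z(h)G(Z)]=E[Z(0)G(B^hZ)]$ for all $h\in\mathbb{Z}^d$ and all 0-homogeneous measurable $G:E\to[0,\infty]$; equivalently, it is the spectral rf of a stationary max-stable rf. *)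

theory Defs
  imports "HOL-Probability.Probability"
begin

definition Efield :: "('i \<Rightarrow> real) measure" where
  "Efield = Pi\<^sub>M UNIV (\<lambda>_. restrict_space borel {0..})"

definition shift :: "'i::minus \<Rightarrow> ('i \<Rightarrow> 'b) \<Rightarrow> 'i \<Rightarrow> 'b" where
  "shift h f = (\<lambda>t. f (t - h))"

definition zero_homogeneous :: "(('i \<Rightarrow> real) \<Rightarrow> 'b) \<Rightarrow> bool" where
  "zero_homogeneous F \<longleftrightarrow>
     (\<forall>c::real. c > 0 \<longrightarrow> (\<forall>f \<in> space Efield. F (\<lambda>t. c * f t) = F f))"

definition shift_invariant :: "(('i::minus \<Rightarrow> real) \<Rightarrow> 'b) \<Rightarrow> bool" where
  "shift_invariant F \<longleftrightarrow> (\<forall>h. \<forall>f \<in> space Efield. F (shift h f) = F f)"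

text \<open>Brown--Resnick stationarity of a non-negative random field Z on M with
  finite positive means.\<close>
definition BRs :: "'a measure \<Rightarrow> ('a \<Rightarrow> (int ^ 'd) \<Rightarrow> real) \<Rightarrow> bool" where
  "BRs M Z \<longleftrightarrow> prob_space M \<and> Z \<in> M \<rightarrow>\<^sub>M Efield \<and>
     (\<forall>t. 0 < (\<integral>\<^sup>+\<omega>. ennreal (Z \<omega> t) \<partial>M) \<and> (\<integral>\<^sup>+\<omega>. ennreal (Z \<omega> t) \<partial>M) < \<infinity>) \<and>
     (\<forall>h. \<forall>G :: ((int ^ 'd) \<Rightarrow> real) \<Rightarrow> ennreal.
        G \<in> borel_measurable Efield \<and> zero_homogeneous G \<longrightarrow>
        (\<integral>\<^sup>+\<omega>. ennreal (Z \<omega> h) * G (Z \<omega>) \<partial>M) =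
        (\<integral>\<^sup>+\<omega>. ennreal (Z \<omega> 0) * G (shift h (Z \<omega>)) \<partial>M))"

end

theory Submission
  imports Defs
begin

text \<open>By the Brown--Resnick property applied to a shift-invariant, 0-homogeneous \<open>F\<close>,
  \<open>E[Z(h) F(Z)] = E[Z(0) F(Z)]\<close> for every \<open>h\<close>, and by 0-homogeneity
  \<open>E[Z(0) F(Z)] = E[Z(0) F(Z/Z(0))] = E[F(\<Theta>)]\<close>.  Hence \<open>E[F(\<Theta>)] = 0\<close> forces
  \<open>Z(h) F(Z) = 0\<close> a.s. for all of the countably many \<open>h\<close>, and since some \<open>Z(h)\<close> is
  positive, \<open>F(Z) = 0\<close> a.s.; the converse is clear.  For \<open>F \<le> 1\<close> the second claim
  is the first one applied to \<open>1 - F\<close>.\<close>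

lemma space_Efield: "f \<in> space Efield \<longleftrightarrow> (\<forall>t. 0 \<le> f t)"
  by (auto simp: Efield_def space_PiM PiE_def Pi_def)

lemma measurable_Efield_component:
  assumes "Z \<in> M \<rightarrow>\<^sub>M Efield"
  shows "(\<lambda>\<omega>. Z \<omega> t) \<in> borel_measurable M"
proof -
  have "(\<lambda>f. f t) \<in> Efield \<rightarrow>\<^sub>M restrict_space borel {0..}"
    unfolding Efield_def by (rule measurable_component_singleton) simp
  then have "(\<lambda>\<omega>. Z \<omega> t) \<in> M \<rightarrow>\<^sub>M restrict_space borel {0..}"
    using measurable_compose[OF assms] by blast
  then show ?thesis by (simp add: measurable_restrict_space2_iff)
qed

lemma measurable_Efield_normalize:
  assumes Z: "Z \<in> M \<rightarrow>\<^sub>M Efield"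
  shows "(\<lambda>\<omega> t. Z \<omega> t / Z \<omega> s) \<in> M \<rightarrow>\<^sub>M Efield"
  unfolding Efield_def
proof (rule measurable_PiM_single')
  have nonneg: "\<And>\<omega> t. \<omega> \<in> space M \<Longrightarrow> 0 \<le> Z \<omega> t"
    using measurable_space[OF Z] space_Efield by blast
  then show "(\<lambda>\<omega> t. Z \<omega> t / Z \<omega> s) \<in> space M \<rightarrow> (\<Pi>\<^sub>E t\<in>UNIV. space (restrict_space borel {0..}))"
    by auto
  fix t
  show "(\<lambda>\<omega>. Z \<omega> t / Z \<omega> s) \<in> M \<rightarrow>\<^sub>M restrict_space borel {0..}"
    using measurable_Efield_component[OF Z] nonneg
    by (auto intro!: measurable_restrict_space2)
qed

lemma nn_integral_weighted_law:
  assumes X: "X \<in> N \<rightarrow>\<^sub>M S" and Y: "Y \<in> M \<rightarrow>\<^sub>M S" and w: "w \<in> borel_measurable M"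
    and law: "\<And>A. A \<in> sets S \<Longrightarrow> emeasure N (X -` A \<inter> space N) = (\<integral>\<^sup>+\<omega>. w \<omega> * indicator A (Y \<omega>) \<partial>M)"
    and F: "F \<in> borel_measurable S"
  shows "(\<integral>\<^sup>+x. F (X x) \<partial>N) = (\<integral>\<^sup>+\<omega>. w \<omega> * F (Y \<omega>) \<partial>M)"
proof -
  have Y': "Y \<in> density M w \<rightarrow>\<^sub>M S"
    by (subst measurable_cong_sets[OF sets_density refl]) (rule Y)
  have "distr N S X = distr (density M w) S Y"
  proof (rule measure_eqI)
    fix A assume "A \<in> sets (distr N S X)"
    then have A: "A \<in> sets S" by simp
    have "emeasure (distr (density M w) S Y) A = (\<integral>\<^sup>+\<omega>. w \<omega> * indicator (Y -` A \<inter> space M) \<omega> \<partial>M)"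
      using emeasure_distr[OF Y' A] emeasure_density[OF w measurable_sets[OF Y A]] by simp
    also have "\<dots> = (\<integral>\<^sup>+\<omega>. w \<omega> * indicator A (Y \<omega>) \<partial>M)"
      by (rule nn_integral_cong) (simp add: indicator_def)
    finally show "emeasure (distr N S X) A = emeasure (distr (density M w) S Y) A"
      using law[OF A] emeasure_distr[OF X A] by simp
  qed simp
  then have "(\<integral>\<^sup>+x. F (X x) \<partial>N) = (\<integral>\<^sup>+\<omega>. F (Y \<omega>) \<partial>density M w)"
    using nn_integral_distr[OF X] nn_integral_distr[OF Y'] F by simp
  also have "\<dots> = (\<integral>\<^sup>+\<omega>. w \<omega> * F (Y \<omega>) \<partial>M)"
    by (rule nn_integral_density[OF w measurable_compose[OF Y F]])
  finally show ?thesis .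
qed

text \<open>If \<open>f s = 0\<close>, the junk quotients \<open>f t / 0 = 0\<close> are harmless thanks to the factor \<open>f s\<close>.\<close>

lemma zero_homogeneous_normalize:
  assumes "zero_homogeneous F" and "f \<in> space Efield"
  shows "ennreal (f s) * F (\<lambda>t. f t / f s) = ennreal (f s) * F f"
proof (cases "f s = 0")
  case False
  with assms(2) have "1 / f s > 0" by (simp add: space_Efield less_le)
  then have "F (\<lambda>t. (1 / f s) * f t) = F f"
    using assms unfolding zero_homogeneous_def by blast
  then show ?thesis by simp
qed simp

lemma BRs_nn_integral_shift_invariant:
  assumes BR: "BRs M Z" and F: "F \<in> borel_measurable Efield"
    and F_shift: "shift_invariant F" and F_hom: "zero_homogeneous F"
  shows "(\<integral>\<^sup>+\<omega>. ennreal (Z \<omega> h) * F (Z \<omega>) \<partial>M) = (\<integral>\<^sup>+\<omega>. ennreal (Z \<omega> 0) * F (Z \<omega>) \<partial>M)"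
proof -
  have Z: "Z \<in> M \<rightarrow>\<^sub>M Efield" using BR by (simp add: BRs_def)
  have "(\<integral>\<^sup>+\<omega>. ennreal (Z \<omega> h) * F (Z \<omega>) \<partial>M) = (\<integral>\<^sup>+\<omega>. ennreal (Z \<omega> 0) * F (shift h (Z \<omega>)) \<partial>M)"
    using BR F F_hom unfolding BRs_def by (elim conjE allE impE) simp_all
  also have "\<dots> = (\<integral>\<^sup>+\<omega>. ennreal (Z \<omega> 0) * F (Z \<omega>) \<partial>M)"
    using F_shift measurable_space[OF Z] unfolding shift_invariant_def
    by (intro nn_integral_cong) simp
  finally show ?thesis .
qed

lemma nn_integral_eq_0_iff_weighted:
  fixes w :: "'i::countable \<Rightarrow> 'a \<Rightarrow> real"
  assumes G: "G \<in> borel_measurable M" and w: "\<And>h. w h \<in> borel_measurable M"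
    and pos: "AE \<omega> in M. \<exists>h. w h \<omega> > 0"
  shows "(\<integral>\<^sup>+\<omega>. G \<omega> \<partial>M) = 0 \<longleftrightarrow> (\<forall>h. (\<integral>\<^sup>+\<omega>. ennreal (w h \<omega>) * G \<omega> \<partial>M) = 0)"
proof -
  have wG: "\<And>h. (\<lambda>\<omega>. ennreal (w h \<omega>) * G \<omega>) \<in> borel_measurable M"
    using G w by measurable
  have "(AE \<omega> in M. G \<omega> = 0) \<longleftrightarrow> (AE \<omega> in M. \<forall>h\<in>UNIV. ennreal (w h \<omega>) * G \<omega> = 0)"
  proof
    assume "AE \<omega> in M. \<forall>h\<in>UNIV. ennreal (w h \<omega>) * G \<omega> = 0"
    with pos show "AE \<omega> in M. G \<omega> = 0"
      by eventually_elim (metis UNIV_I ennreal_eq_0_iff mult_eq_0_iff not_le)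
  qed (rule AE_mp, auto)
  also have "\<dots> \<longleftrightarrow> (\<forall>h\<in>UNIV. AE \<omega> in M. ennreal (w h \<omega>) * G \<omega> = 0)"
    by (rule AE_ball_countable) simp
  finally show ?thesis
    by (simp add: nn_integral_0_iff_AE[OF G] nn_integral_0_iff_AE[OF wG])
qed

lemma nn_integral_one_minus_eq_0_iff:
  assumes "prob_space M" and G: "G \<in> borel_measurable M" and le1: "\<And>x. x \<in> space M \<Longrightarrow> G x \<le> 1"
  shows "(\<integral>\<^sup>+x. 1 - G x \<partial>M) = 0 \<longleftrightarrow> (\<integral>\<^sup>+x. G x \<partial>M) = 1"
proof -
  have one: "(\<integral>\<^sup>+x. 1 \<partial>M) = 1"
    using assms(1) prob_space.emeasure_space_1 by simp
  have bound: "(\<integral>\<^sup>+x. G x \<partial>M) \<le> 1"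
    using nn_integral_mono[of M G "\<lambda>_. 1"] le1 one by simp
  have "(\<integral>\<^sup>+x. 1 - G x \<partial>M) = 1 - (\<integral>\<^sup>+x. G x \<partial>M)"
    using bound one by (subst nn_integral_diff) (auto simp: G le1 top_unique)
  then show ?thesis
    using bound by (auto simp: diff_eq_0_iff_ennreal intro: antisym)
qed

lemma nn_integral_spectral_tail:
  fixes Z :: "'a \<Rightarrow> (int ^ 'd) \<Rightarrow> real" and \<Theta> :: "'b \<Rightarrow> (int ^ 'd) \<Rightarrow> real"
  assumes BR: "BRs M Z" and \<Theta>_meas: "\<Theta> \<in> N \<rightarrow>\<^sub>M Efield"
    and \<Theta>_law: "\<And>A. A \<in> sets Efield \<Longrightarrow>
        emeasure N (\<Theta> -` A \<inter> space N) =
        (\<integral>\<^sup>+\<omega>. ennreal (Z \<omega> 0) * indicator A (\<lambda>t. Z \<omega> t / Z \<omega> 0) \<partial>M)"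
    and F: "F \<in> borel_measurable Efield"
    and F_shift: "shift_invariant F" and F_hom: "zero_homogeneous F"
  shows "(\<integral>\<^sup>+x. F (\<Theta> x) \<partial>N) = (\<integral>\<^sup>+\<omega>. ennreal (Z \<omega> h) * F (Z \<omega>) \<partial>M)"
proof -
  have Z: "Z \<in> M \<rightarrow>\<^sub>M Efield" using BR by (simp add: BRs_def)
  have "(\<integral>\<^sup>+x. F (\<Theta> x) \<partial>N) = (\<integral>\<^sup>+\<omega>. ennreal (Z \<omega> 0) * F (\<lambda>t. Z \<omega> t / Z \<omega> 0) \<partial>M)"
    using measurable_Efield_component[OF Z]
    by (intro nn_integral_weighted_law[OF \<Theta>_meas measurable_Efield_normalize[OF Z] _ \<Theta>_law F])
      measurable
  also have "\<dots> = (\<integral>\<^sup>+\<omega>. ennreal (Z \<omega> 0) * F (Z \<omega>) \<partial>M)"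
    using zero_homogeneous_normalize[OF F_hom] measurable_space[OF Z]
    by (intro nn_integral_cong) blast
  also have "\<dots> = (\<integral>\<^sup>+\<omega>. ennreal (Z \<omega> h) * F (Z \<omega>) \<partial>M)"
    using BRs_nn_integral_shift_invariant[OF BR F F_shift F_hom] by (rule sym)
  finally show ?thesis .
qed

lemma nn_integral_spectral_tail_eq_0_iff:
  fixes Z :: "'a \<Rightarrow> (int ^ 'd) \<Rightarrow> real" and \<Theta> :: "'b \<Rightarrow> (int ^ 'd) \<Rightarrow> real"
  assumes BR: "BRs M Z" and sup_pos: "AE \<omega> in M. \<exists>t. Z \<omega> t > 0"
    and \<Theta>_meas: "\<Theta> \<in> N \<rightarrow>\<^sub>M Efield"
    and \<Theta>_law: "\<And>A. A \<in> sets Efield \<Longrightarrow>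
        emeasure N (\<Theta> -` A \<inter> space N) =
        (\<integral>\<^sup>+\<omega>. ennreal (Z \<omega> 0) * indicator A (\<lambda>t. Z \<omega> t / Z \<omega> 0) \<partial>M)"
    and F: "F \<in> borel_measurable Efield"
    and F_shift: "shift_invariant F" and F_hom: "zero_homogeneous F"
  shows "(\<integral>\<^sup>+\<omega>. F (Z \<omega>) \<partial>M) = 0 \<longleftrightarrow> (\<integral>\<^sup>+x. F (\<Theta> x) \<partial>N) = 0"
proof -
  have Z: "Z \<in> M \<rightarrow>\<^sub>M Efield" using BR by (simp add: BRs_def)
  have "(\<integral>\<^sup>+\<omega>. F (Z \<omega>) \<partial>M) = 0 \<longleftrightarrow> (\<forall>h. (\<integral>\<^sup>+\<omega>. ennreal (Z \<omega> h) * F (Z \<omega>) \<partial>M) = 0)"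
    by (rule nn_integral_eq_0_iff_weighted[OF measurable_compose[OF Z F]
          measurable_Efield_component[OF Z] sup_pos])
  then show ?thesis
    using nn_integral_spectral_tail[OF BR \<Theta>_meas \<Theta>_law F F_shift F_hom] by simp
qed

theorem lemmaA2:
  fixes M :: "'a measure" and Z :: "'a \<Rightarrow> (int ^ 'd) \<Rightarrow> real"
    and N :: "'b measure" and \<Theta> :: "'b \<Rightarrow> (int ^ 'd) \<Rightarrow> real"
    and F :: "((int ^ 'd) \<Rightarrow> real) \<Rightarrow> ennreal"
  assumes BR: "BRs M Z"
    and sup_pos: "AE \<omega> in M. \<exists>t. Z \<omega> t > 0"
    and mean1: "\<And>t. (\<integral>\<^sup>+\<omega>. ennreal (Z \<omega> t) \<partial>M) = 1"
    and N: "prob_space N" and \<Theta>_meas: "\<Theta> \<in> N \<rightarrow>\<^sub>M Efield"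
    and \<Theta>_law: "\<And>A. A \<in> sets Efield \<Longrightarrow>
        emeasure N (\<Theta> -` A \<inter> space N) =
        (\<integral>\<^sup>+\<omega>. ennreal (Z \<omega> 0) * indicator A (\<lambda>t. Z \<omega> t / Z \<omega> 0) \<partial>M)"
    and F_meas: "F \<in> borel_measurable Efield"
    and F_shift: "shift_invariant F" and F_hom: "zero_homogeneous F"
  shows "((\<integral>\<^sup>+\<omega>. F (Z \<omega>) \<partial>M) = 0 \<longleftrightarrow> (\<integral>\<^sup>+x. F (\<Theta> x) \<partial>N) = 0)
       \<and> ((\<forall>f \<in> space Efield. F f \<le> 1) \<longrightarrow>
           ((\<integral>\<^sup>+\<omega>. F (Z \<omega>) \<partial>M) = 1 \<longleftrightarrow> (\<integral>\<^sup>+x. F (\<Theta> x) \<partial>N) = 1))"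
proof (intro conjI impI)
  have spectral_eq_0_iff: "(\<integral>\<^sup>+\<omega>. G (Z \<omega>) \<partial>M) = 0 \<longleftrightarrow> (\<integral>\<^sup>+x. G (\<Theta> x) \<partial>N) = 0"
    if "G \<in> borel_measurable Efield" "shift_invariant G" "zero_homogeneous G" for G
    using BR sup_pos \<Theta>_meas \<Theta>_law that by (rule nn_integral_spectral_tail_eq_0_iff)
  show "(\<integral>\<^sup>+\<omega>. F (Z \<omega>) \<partial>M) = 0 \<longleftrightarrow> (\<integral>\<^sup>+x. F (\<Theta> x) \<partial>N) = 0"
    using F_meas F_shift F_hom by (rule spectral_eq_0_iff)
  assume le1: "\<forall>f \<in> space Efield. F f \<le> 1"
  define F' where "F' f = 1 - F f" for f
  have F'_meas: "F' \<in> borel_measurable Efield"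
    unfolding F'_def using F_meas by measurable
  have "shift_invariant F'" "zero_homogeneous F'"
    using F_shift F_hom by (simp_all add: F'_def shift_invariant_def zero_homogeneous_def)
  note F'_eq_0_iff = spectral_eq_0_iff[OF F'_meas this]
  have one_minus: "(\<integral>\<^sup>+x. F' (X x) \<partial>L) = 0 \<longleftrightarrow> (\<integral>\<^sup>+x. F (X x) \<partial>L) = 1"
    if "prob_space L" and X: "X \<in> L \<rightarrow>\<^sub>M Efield" for L :: "'c measure" and X
    unfolding F'_def using le1 measurable_space[OF X]
    by (intro nn_integral_one_minus_eq_0_iff that(1) measurable_compose[OF X F_meas]) blast
  have "prob_space M" and "Z \<in> M \<rightarrow>\<^sub>M Efield" using BR by (simp_all add: BRs_def)
  then show "(\<integral>\<^sup>+\<omega>. F (Z \<omega>) \<partial>M) = 1 \<longleftrightarrow> (\<integral>\<^sup>+x. F (\<Theta> x) \<partial>N) = 1"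
    using F'_eq_0_iff one_minus[OF N \<Theta>_meas] by (simp add: one_minus)
qed

end
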